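(* Let $d\ge2$, $\omega=e^{2\pi\mathrm{i}/d}$, $\omega^x=e^{2\pi\mathrm{i}x/d}$ for real $x$, and $a_k=\frac{1-\mathrm{i}}{2}\omega^{k/4}$ for $k=1,\dots,d-1$. Let $B_1,B_2$ be unitary operators on a finite-dimensional Hilbert space whose eigenvalues lie in $\{\omega^l: l=0,\dots,d-1\}$. Define, for $k=1,\dots,d-1$, $$C_1^{(k)}=a_kB_1^{-k}+a_k^*\omega^kB_2^{-k},\qquad C_2^{(k)}=a_k^*B_1^{-k}+a_kB_2^{-k}.$$ Suppose that for $i=1,2$ and all $k=1,\dots,d-1$: $C_i^{(k)}=\big[C_i^{(1)}\big]^k$ and $C_i^{(d-k)}C_i^{(k)}=\mathbb{1}$. Then for every positive integer $n<d$ dividing $d$, $\operatorname{Tr}(B_1^n)=\operatorname{Tr}(B_2^n)=0$. *)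

theory Defs
  imports "HOL-Analysis.Analysis"
begin

text \<open>Operators on a finite-dimensional complex Hilbert space are represented as
  square complex matrices indexed by a finite type.\<close>

fun mpow :: "complex^'n^'n \<Rightarrow> nat \<Rightarrow> complex^'n^'n" where
  "mpow A 0 = mat 1"
| "mpow A (Suc k) = A ** mpow A k"

definition cadjoint :: "complex^'n^'n \<Rightarrow> complex^'n^'n" where
  "cadjoint A = (\<chi> i j. cnj (A $ j $ i))"

definition unitary_mat :: "complex^'n^'n \<Rightarrow> bool" where
  "unitary_mat U \<longleftrightarrow> U ** cadjoint U = mat 1 \<and> cadjoint U ** U = mat 1"

definition is_eigenvalue :: "complex^'n^'n \<Rightarrow> complex \<Rightarrow> bool" where
  "is_eigenvalue A c \<longleftrightarrow> (\<exists>v. v \<noteq> 0 \<and> A *v v = c *s v)"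

definition cscale :: "complex \<Rightarrow> complex^'n^'n \<Rightarrow> complex^'n^'n" where
  "cscale c A = (\<chi> i j. c * A $ i $ j)"

definition omega_pow :: "nat \<Rightarrow> real \<Rightarrow> complex" where
  "omega_pow d x = exp (2 * of_real pi * \<i> * of_real x / of_nat d)"

definition acoef :: "nat \<Rightarrow> nat \<Rightarrow> complex" where
  "acoef d k = (1 - \<i>) / 2 * omega_pow d (real k / 4)"

definition Cop1 :: "nat \<Rightarrow> complex^'n^'n \<Rightarrow> complex^'n^'n \<Rightarrow> nat \<Rightarrow> complex^'n^'n" where
  "Cop1 d B1 B2 k = cscale (acoef d k) (mpow (matrix_inv B1) k)
     + cscale (cnj (acoef d k) * omega_pow d (real k)) (mpow (matrix_inv B2) k)"

definition Cop2 :: "nat \<Rightarrow> complex^'n^'n \<Rightarrow> complex^'n^'n \<Rightarrow> nat \<Rightarrow> complex^'n^'n" where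
  "Cop2 d B1 B2 k = cscale (cnj (acoef d k)) (mpow (matrix_inv B1) k)
     + cscale (acoef d k) (mpow (matrix_inv B2) k)"

end

theory Submission
  imports Defs
begin

text \<open>
  Put \<open>P = \<omega>^(-1/4) B\<^sub>1\<^sup>-\<^sup>1\<close>, \<open>Q = \<omega>^(1/4) B\<^sub>2\<^sup>-\<^sup>1\<close> and \<open>a = (1 - i)/2\<close>. Then
  \<open>C\<^sub>1\<^sup>(\<^sup>k\<^sup>) = \<omega>^(k/2) D\<^sub>k\<close> and \<open>C\<^sub>2\<^sup>(\<^sup>k\<^sup>) = E\<^sub>k\<close> with \<open>D\<^sub>k = a P^k + a\<^sup>* Q^k\<close> and
  \<open>E\<^sub>k = a\<^sup>* P^k + a Q^k\<close>. Since \<open>a\<^sup>2 + a\<^sup>*\<^sup>2 = 0\<close> and \<open>2 a a\<^sup>* = 1\<close>,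
  \<open>D\<^sub>k + E\<^sub>k = P^k + Q^k\<close>, \<open>D\<^sub>k D\<^sub>1 + E\<^sub>k E\<^sub>1 = P^k Q + Q^k P\<close> and
  \<open>D\<^sub>k D\<^sub>1 - E\<^sub>k E\<^sub>1 = -i (P^(k+1) - Q^(k+1))\<close>.

  The hypotheses say \<open>D\<^sub>k = D\<^sub>1^k\<close>, \<open>E\<^sub>k = E\<^sub>1^k\<close> for \<open>k < d\<close>, \<open>D\<^sub>1^d = -1\<close> and
  \<open>E\<^sub>1^d = 1\<close>. For \<open>k = d - 1\<close> the last identity gives \<open>B\<^sub>1\<^sup>-\<^sup>d + B\<^sub>2\<^sup>-\<^sup>d = 2\<close>, and a sum
  of two unitaries equals 2 only if both are 1. So \<open>P^d = -i\<close>, \<open>Q^d = i\<close>, the multiplicativity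
  extends to \<open>k = d\<close>, and for \<open>d = n m\<close> the matrices \<open>P' = P^n\<close>, \<open>Q' = Q^n\<close> satisfy
  \<open>P'^(k+1) + Q'^(k+1) = P'^k Q' + Q'^k P'\<close> for \<open>1 \<le> k < m\<close> and \<open>P'^m + Q'^m = 0\<close>.

  For such a pair, \<open>F = P'\<^sup>-\<^sup>1 (P' - Q')\<close> satisfies \<open>\<Sum>\<^sub>j\<^sub><\<^sub>m P'\<^sup>-\<^sup>j F P'^j = 2\<close>,
  \<open>F P' F = 0\<close> and \<open>F\<^sup>2 = 2 F\<close>. The last two give \<open>tr (P' F) = 0\<close>, then the first gives
  \<open>2 tr P' = m tr (P' F) = 0\<close>, and \<open>Q' = P' - P' F\<close> gives \<open>tr Q' = 0\<close>.
\<close>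

section \<open>Consequences of power relations in a ring\<close>

lemma power_diff_telescope:
  fixes P Pi Q :: "'a::ring_1"
  assumes inv: "Pi * P = 1"
    and rel: "P ^ Suc k + Q ^ Suc k = P ^ k * Q + Q ^ k * P"
  shows "Pi ^ Suc k * (P ^ Suc k - Q ^ Suc k)
    = Pi * (P - Q) + Pi * (Pi ^ k * (P ^ k - Q ^ k)) * P"
proof -
  have "Q ^ Suc k = P ^ k * Q + Q ^ k * P - P ^ Suc k"
    using rel by (simp add: eq_diff_eq add.commute)
  then have diff: "P ^ Suc k - Q ^ Suc k = P ^ k * (P - Q) + (P ^ k - Q ^ k) * P"
    unfolding power_Suc2 by (simp add: algebra_simps)
  have "Pi ^ Suc k * (P ^ Suc k - Q ^ Suc k)
      = (Pi ^ Suc k * P ^ k) * (P - Q) + Pi * (Pi ^ k * (P ^ k - Q ^ k)) * P"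
    unfolding diff by (simp only: distrib_left mult.assoc power_Suc)
  also have "Pi ^ Suc k * P ^ k = Pi"
    using left_right_inverse_power[OF inv, of k] by (simp add: mult.assoc)
  finally show ?thesis .
qed

lemma power_diff_eq_conjugate_sum:
  fixes P Pi Q :: "'a::ring_1"
  assumes inv: "Pi * P = 1"
    and rel: "\<And>k. 1 \<le> k \<Longrightarrow> k < m \<Longrightarrow> P ^ Suc k + Q ^ Suc k = P ^ k * Q + Q ^ k * P"
    and "1 \<le> m"
  shows "Pi ^ m * (P ^ m - Q ^ m) = (\<Sum>j<m. Pi ^ j * (Pi * (P - Q)) * P ^ j)"
  using \<open>1 \<le> m\<close> rel
proof (induction m rule: nat_induct_at_least)
  case base
  then show ?case by simp
next
  case (Suc m)
  have "Pi ^ Suc m * (P ^ Suc m - Q ^ Suc m) = Pi * (P - Q) + Pi * (Pi ^ m * (P ^ m - Q ^ m)) * P"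
    using power_diff_telescope[OF inv] Suc.prems Suc.hyps by simp
  also have "\<dots> = Pi * (P - Q) + (\<Sum>j<m. Pi ^ Suc j * (Pi * (P - Q)) * P ^ Suc j)"
    using Suc by (simp add: sum_distrib_left sum_distrib_right mult.assoc power_commutes)
  also have "\<dots> = (\<Sum>j<Suc m. Pi ^ j * (Pi * (P - Q)) * P ^ j)"
    by (simp only: sum.lessThan_Suc_shift power_0 mult_1_left mult_1_right)
  finally show ?case .
qed

lemma conjugate_mult_conjugate_eq_0:
  fixes P Pi Q :: "'a::ring_1"
  assumes "P * Pi = 1" and "P * P + Q * Q = P * Q + Q * P"
  shows "Pi * (P - Q) * P * (Pi * (P - Q)) = 0"
proof -
  have "Pi * (P - Q) * P * (Pi * (P - Q)) = Pi * ((P - Q) * (P * Pi) * (P - Q))"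
    by (simp only: mult.assoc)
  also have "\<dots> = Pi * ((P * P + Q * Q) - (P * Q + Q * P))"
    using assms(1) by (simp add: algebra_simps)
  finally show ?thesis
    using assms(2) by simp
qed

lemma sandwich_eq_of_power_relation:
  fixes P Pi Q :: "'a::ring_1"
  assumes inv: "Pi * P = 1" "P * Pi = 1"
    and rel: "P ^ Suc l + Q ^ Suc l = P ^ l * Q + Q ^ l * P"
    and vanish: "P ^ Suc l + Q ^ Suc l = 0"
  shows "Q * Pi * Q = P"
proof -
  have "Q ^ l * P = - (P ^ l * Q)"
    using rel vanish by (simp add: eq_neg_iff_add_eq_0 add.commute)
  have "Q ^ Suc l = Q ^ l * (P * Pi) * Q"
    unfolding power_Suc2 inv(2) by simp
  also have "\<dots> = (Q ^ l * P) * (Pi * Q)"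
    by (simp only: mult.assoc)
  also have "\<dots> = - (P ^ l * (Q * Pi * Q))"
    unfolding \<open>Q ^ l * P = - (P ^ l * Q)\<close> by (simp add: mult.assoc)
  finally have "Q ^ Suc l = - (P ^ l * (Q * Pi * Q))" .
  moreover have "Q ^ Suc l = - (P ^ l * P)"
    using vanish unfolding power_Suc2 by (simp add: eq_neg_iff_add_eq_0 add.commute)
  ultimately have "Pi ^ l * (P ^ l * (Q * Pi * Q)) = Pi ^ l * (P ^ l * P)"
    by simp
  then show ?thesis
    using left_right_inverse_power[OF inv(1)] by (simp flip: mult.assoc)
qed

lemma conjugate_identities_of_power_relations:
  fixes P Pi Q :: "'a::ring_1"
  defines "F \<equiv> Pi * (P - Q)"
  assumes inv: "Pi * P = 1" "P * Pi = 1" and "2 \<le> m"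
    and rel: "\<And>k. 1 \<le> k \<Longrightarrow> k < m \<Longrightarrow> P ^ Suc k + Q ^ Suc k = P ^ k * Q + Q ^ k * P"
    and vanish: "P ^ m + Q ^ m = 0"
  shows "(\<Sum>j<m. Pi ^ j * F * P ^ j) = 1 + 1" and "F * (P * F) = 0" and "F * F = F + F"
proof -
  have "Q ^ m = - (P ^ m)"
    using vanish by (simp add: eq_neg_iff_add_eq_0 add.commute)
  then have "Pi ^ m * (P ^ m - Q ^ m) = 1 + 1"
    using left_right_inverse_power[OF inv(1), of m] by (simp add: distrib_left)
  then show "(\<Sum>j<m. Pi ^ j * F * P ^ j) = 1 + 1"
    using power_diff_eq_conjugate_sum[OF inv(1) rel] \<open>2 \<le> m\<close> by (simp add: F_def)
  show "F * (P * F) = 0"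
    using conjugate_mult_conjugate_eq_0[OF inv(2)] rel[of 1] \<open>2 \<le> m\<close>
    by (simp add: F_def mult.assoc)
  obtain l where l: "m = Suc l" "1 \<le> l"
    using \<open>2 \<le> m\<close> by (cases m) auto
  have "Q * Pi * Q = P"
    using sandwich_eq_of_power_relation[OF inv rel[of l]] vanish l by simp
  then have "Pi * (Q * (Pi * Q)) = 1"
    using inv(1) by (simp add: mult.assoc)
  moreover have F_alt: "F = 1 - Pi * Q"
    using inv(1) by (simp add: F_def right_diff_distrib)
  moreover have "F * F = 1 - Pi * Q - Pi * Q + Pi * (Q * (Pi * Q))"
    unfolding F_alt by (simp add: algebra_simps)
  ultimately show "F * F = F + F"
    by simp
qed

section \<open>Complex square matrices as a ring\<close>

text \<open>The type \<open>complex^'n^'n\<close> itself cannot be made a ring: its \<open>*\<close> is already the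
  componentwise product.\<close>

typedef ('n::finite) cmat = "UNIV :: (complex^'n^'n) set"
  morphisms Rep_cmat Abs_cmat by auto

setup_lifting type_definition_cmat

lemma mat_1_neq_0: "(mat 1 :: complex^'n::finite^'n) \<noteq> 0"
  by (simp add: vec_eq_iff mat_def)

instantiation cmat :: (finite) ring_1
begin
lift_definition zero_cmat :: "'a cmat" is 0 .
lift_definition one_cmat :: "'a cmat" is "mat 1" .
lift_definition plus_cmat :: "'a cmat \<Rightarrow> 'a cmat \<Rightarrow> 'a cmat" is "(+)" .
lift_definition minus_cmat :: "'a cmat \<Rightarrow> 'a cmat \<Rightarrow> 'a cmat" is "(-)" .
lift_definition uminus_cmat :: "'a cmat \<Rightarrow> 'a cmat" is uminus .
lift_definition times_cmat :: "'a cmat \<Rightarrow> 'a cmat \<Rightarrow> 'a cmat" is "(**)" .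
instance
proof
  fix a b c :: "'a cmat"
  show "a * b * c = a * (b * c)" by transfer (simp add: matrix_mul_assoc)
  show "a + b + c = a + (b + c)" by transfer (simp add: add.assoc)
  show "a + b = b + a" by transfer (simp add: add.commute)
  show "0 + a = a" by transfer simp
  show "- a + a = 0" by transfer simp
  show "a - b = a + - b" by transfer simp
  show "(a + b) * c = a * c + b * c"
    by transfer (vector matrix_matrix_mult_def sum.distrib[symmetric] field_simps)
  show "a * (b + c) = a * b + a * c" by transfer (simp add: matrix_add_ldistrib)
  show "1 * a = a" by transfer simp
  show "a * 1 = a" by transfer simp
  show "(0::'a cmat) \<noteq> 1" by transfer (rule mat_1_neq_0[symmetric])
qed
end

lift_definition of_complex :: "complex \<Rightarrow> 'n::finite cmat" is mat .
lift_definition adj :: "'n::finite cmat \<Rightarrow> 'n cmat" is cadjoint .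
lift_definition tr :: "'n::finite cmat \<Rightarrow> complex" is trace .

lemma mat_matrix_mult: "(mat c :: complex^'n::finite^'n) ** A = (\<chi> i j. c * A $ i $ j)"
  and matrix_mat_mult: "A ** (mat c :: complex^'n::finite^'n) = (\<chi> i j. c * A $ i $ j)"
  by (simp_all add: matrix_matrix_mult_def mat_def vec_eq_iff if_distrib if_distribR mult.commute
      cong: if_cong)

lemma of_complex_mult_commute: "x * of_complex c = of_complex c * x"
  by transfer (simp add: mat_matrix_mult matrix_mat_mult)

lemma of_complex_mult: "of_complex (a * b) = of_complex a * of_complex b"
  by transfer (subst mat_matrix_mult, simp add: mat_def vec_eq_iff)

lemma of_complex_add: "of_complex (a + b) = of_complex a + of_complex b"
  and of_complex_diff: "of_complex (a - b) = of_complex a - of_complex b"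
  and of_complex_minus: "of_complex (- a) = - of_complex a"
  and of_complex_0 [simp]: "of_complex 0 = 0"
  and of_complex_1 [simp]: "of_complex 1 = 1"
  by (transfer, simp add: mat_def vec_eq_iff)+

lemma of_complex_left_commute: "x * (of_complex c * y) = of_complex c * (x * y)"
  by (simp only: mult.assoc[symmetric] of_complex_mult_commute)

lemma power_of_complex_mult: "(of_complex c * x) ^ k = of_complex (c ^ k) * x ^ k"
  by (induction k) (simp_all add: of_complex_mult of_complex_left_commute[of x] mult.assoc)

lemma of_complex_cancel:
  assumes "c \<noteq> 0" and "of_complex c * x = of_complex c * y"
  shows "x = y"
proof -
  have "of_complex (1 / c) * (of_complex c * x) = of_complex (1 / c) * (of_complex c * y)"
    using assms(2) by simp
  then show ?thesis
    using assms(1) by (simp add: mult.assoc[symmetric] of_complex_mult[symmetric])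
qed

lemma adj_mult: "adj (x * y) = adj y * adj x"
  by transfer (simp add: cadjoint_def matrix_matrix_mult_def vec_eq_iff mult.commute)

lemma adj_add: "adj (x + y) = adj x + adj y"
  and adj_diff: "adj (x - y) = adj x - adj y"
  and adj_1 [simp]: "adj 1 = 1"
  by (transfer, simp add: cadjoint_def mat_def vec_eq_iff)+

lemma adj_power: "adj (x ^ k) = adj x ^ k"
  by (induction k) (simp_all add: adj_mult power_commutes)

lemma adj_mult_self_eq_0_iff: "adj x * x = 0 \<longleftrightarrow> x = 0"
proof transfer
  fix A :: "complex^'n^'n"
  have diag: "Re ((cadjoint A ** A) $ j $ j) = (\<Sum>k\<in>UNIV. (cmod (A $ k $ j))\<^sup>2)" for j
  proof -
    have "Re (cnj z * z) = (cmod z)\<^sup>2" for z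
      by (subst cmod_power2) (simp add: power2_eq_square)
    then show ?thesis
      by (simp add: matrix_matrix_mult_def cadjoint_def)
  qed
  show "cadjoint A ** A = 0 \<longleftrightarrow> A = 0"
  proof
    assume "cadjoint A ** A = 0"
    then have "(\<Sum>k\<in>UNIV. (cmod (A $ k $ j))\<^sup>2) = 0" for j
      using diag[of j] by simp
    then have "A $ k $ j = 0" for k j
      using sum_nonneg_eq_0_iff[of UNIV "\<lambda>k. (cmod (A $ k $ j))\<^sup>2"] by simp
    then show "A = 0"
      by (simp add: vec_eq_iff)
  qed (simp add: cadjoint_def matrix_matrix_mult_def zero_vec_def)
qed

lemma tr_mult_commute: "tr (x * y) = tr (y * x)"
  by transfer (rule trace_mul_sym)

lemma tr_add: "tr (x + y) = tr x + tr y"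
  and tr_diff: "tr (x - y) = tr x - tr y"
  by (transfer, simp add: trace_add trace_sub)+

lemma tr_0 [simp]: "tr 0 = 0"
  by transfer (simp add: trace_def)

lemma tr_sum: "tr (sum f A) = (\<Sum>a\<in>A. tr (f a))"
  by (induction A rule: infinite_finite_induct) (simp_all add: tr_add)

lemma tr_of_complex_mult: "tr (of_complex c * x) = c * tr x"
  by transfer (simp add: mat_matrix_mult trace_def sum_distrib_left)

lemma tr_adj: "tr (adj x) = cnj (tr x)"
  by transfer (simp add: cadjoint_def trace_def)

lemma tr_eq_0_of_power_relations:
  fixes P Pi Q :: "'n::finite cmat"
  assumes inv: "Pi * P = 1" "P * Pi = 1" and "2 \<le> m"
    and rel: "\<And>k. 1 \<le> k \<Longrightarrow> k < m \<Longrightarrow> P ^ Suc k + Q ^ Suc k = P ^ k * Q + Q ^ k * P"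
    and vanish: "P ^ m + Q ^ m = 0"
  shows "tr P = 0 \<and> tr Q = 0"
proof -
  define F where "F = Pi * (P - Q)"
  have F: "(\<Sum>j<m. Pi ^ j * F * P ^ j) = 1 + 1" "F * (P * F) = 0" "F * F = F + F"
    unfolding F_def
    by (rule conjugate_identities_of_power_relations[OF inv \<open>2 \<le> m\<close> _ vanish]; fact rel)+
  have "tr (P * F) + tr (P * F) = tr (P * (F * F))"
    unfolding F(3) distrib_left tr_add ..
  also have "\<dots> = tr (F * (P * F))"
    by (simp only: mult.assoc[symmetric] tr_mult_commute[of "P * F" F])
  finally have tr_PF: "tr (P * F) = 0"
    using F(2) by simp
  have tr_conj: "tr (P * (Pi ^ j * F * P ^ j)) = tr (P * F)" for j
  proof -
    have "tr (P * (Pi ^ j * F * P ^ j)) = tr ((P * Pi ^ j * F) * P ^ j)"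
      by (simp only: mult.assoc)
    also have "\<dots> = tr (P ^ j * (P * Pi ^ j * F))"
      by (rule tr_mult_commute)
    also have "\<dots> = tr ((P ^ j * P * Pi ^ j) * F)"
      by (simp only: mult.assoc)
    also have "P ^ j * P * Pi ^ j = P"
      using left_right_inverse_power[OF inv(2), of j] by (simp add: power_commutes mult.assoc)
    finally show ?thesis .
  qed
  have "tr P + tr P = tr (P * (1 + 1))"
    by (simp only: distrib_left mult_1_right tr_add)
  also have "\<dots> = (\<Sum>j<m. tr (P * (Pi ^ j * F * P ^ j)))"
    by (simp only: F(1)[symmetric] sum_distrib_left tr_sum)
  finally have tr_P: "tr P = 0"
    using tr_conj tr_PF by simp
  have "Q = P - P * F"
    using inv by (simp add: F_def algebra_simps flip: mult.assoc)
  then show ?thesis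
    using tr_P tr_PF by (simp add: tr_diff)
qed

definition unitary :: "'n::finite cmat \<Rightarrow> bool"
  where "unitary U \<longleftrightarrow> adj U * U = 1 \<and> U * adj U = 1"

lemma unitary_power: "unitary U \<Longrightarrow> unitary (U ^ k)"
  unfolding unitary_def adj_power
  using left_right_inverse_power[of "adj U" U k] left_right_inverse_power[of U "adj U" k] by simp

lemma unitary_eq_1_if_add_eq_2:
  assumes "unitary U" and "unitary V" and "U + V = 2"
  shows "U = 1"
proof -
  define W where "W = U - 1"
  have U: "U = W + 1" and V: "V = 1 - W"
    using assms(3) by (simp_all add: W_def algebra_simps)
  have "adj W * W + adj W + W = 0"
    using assms(1) unfolding unitary_def U by (simp add: adj_add algebra_simps)
  moreover have "adj W * W - adj W - W = 0"
    using assms(2) unfolding unitary_def V by (simp add: adj_diff algebra_simps)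
  moreover have "adj W * W + adj W * W = (adj W * W + adj W + W) + (adj W * W - adj W - W)"
    by (simp add: algebra_simps)
  ultimately have "of_complex 2 * (adj W * W) = of_complex 2 * 0"
    by (metis mult_2 of_complex_1 of_complex_add one_add_one add.right_neutral mult_zero_right)
  then have "adj W * W = 0"
    by (rule of_complex_cancel[rotated]) simp
  then show ?thesis
    by (simp add: adj_mult_self_eq_0_iff W_def)
qed

section \<open>Mixed powers\<close>

lemma of_complex_mult_mult: "of_complex a * x * (of_complex b * y) = of_complex (a * b) * (x * y)"
  by (simp add: of_complex_mult of_complex_left_commute[of x] mult.assoc)

definition mixed_power :: "complex \<Rightarrow> complex \<Rightarrow> 'n::finite cmat \<Rightarrow> 'n cmat \<Rightarrow> nat \<Rightarrow> 'n cmat"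
  where "mixed_power a b P Q k = of_complex a * P ^ k + of_complex b * Q ^ k"

abbreviation Dmix :: "'n::finite cmat \<Rightarrow> 'n cmat \<Rightarrow> nat \<Rightarrow> 'n cmat"
  where "Dmix \<equiv> mixed_power ((1 - \<i>) / 2) ((1 + \<i>) / 2)"

abbreviation Emix :: "'n::finite cmat \<Rightarrow> 'n cmat \<Rightarrow> nat \<Rightarrow> 'n cmat"
  where "Emix \<equiv> mixed_power ((1 + \<i>) / 2) ((1 - \<i>) / 2)"

lemma mixed_power_mult_1:
  "mixed_power a b P Q k * mixed_power a b P Q 1
    = of_complex (a * a) * P ^ Suc k + of_complex (a * b) * (P ^ k * Q + Q ^ k * P)
      + of_complex (b * b) * Q ^ Suc k"
  unfolding mixed_power_def power_one_right
  by (simp only: distrib_left distrib_right of_complex_mult_mult power_Suc2 mult.commute[of b a]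
      add_ac)

lemma mixed_power_swap_add:
  "mixed_power a b P Q k + mixed_power b a P Q k = of_complex (a + b) * (P ^ k + Q ^ k)"
  unfolding mixed_power_def by (simp add: of_complex_add algebra_simps)

lemma mixed_power_mult_swap_add:
  fixes P Q :: "'n::finite cmat"
  assumes "a * a + b * b = 0" and "2 * a * b = 1"
  shows "mixed_power a b P Q k * mixed_power a b P Q 1 + mixed_power b a P Q k * mixed_power b a P Q 1
    = P ^ k * Q + Q ^ k * P"
proof -
  have "mixed_power a b P Q k * mixed_power a b P Q 1 + mixed_power b a P Q k * mixed_power b a P Q 1
      = of_complex (a * a + b * b) * (P ^ Suc k + Q ^ Suc k)
        + (of_complex (a * b) + of_complex (a * b)) * (P ^ k * Q + Q ^ k * P)"
    unfolding mixed_power_mult_1 by (simp add: of_complex_add algebra_simps mult.commute[of b a])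
  moreover have "of_complex (a * b) + of_complex (a * b) = (of_complex (2 * a * b) :: 'n cmat)"
    by (simp only: of_complex_add[symmetric] mult_2 distrib_right)
  ultimately show ?thesis
    using assms by simp
qed

lemma mixed_power_mult_swap_diff:
  "mixed_power a b P Q k * mixed_power a b P Q 1 - mixed_power b a P Q k * mixed_power b a P Q 1
    = of_complex (a * a - b * b) * (P ^ Suc k - Q ^ Suc k)"
  unfolding mixed_power_mult_1 by (simp add: of_complex_diff algebra_simps mult.commute[of b a])

lemma mixed_power_power: "mixed_power a b (P ^ n) (Q ^ n) k = mixed_power a b P Q (n * k)"
  by (simp add: mixed_power_def power_mult)

lemma power_relation_of_mixed_power_mult:
  fixes P Q :: "'n::finite cmat"
  assumes "Dmix P Q (Suc k) = Dmix P Q k * Dmix P Q 1" and "Emix P Q (Suc k) = Emix P Q k * Emix P Q 1"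
  shows "P ^ Suc k + Q ^ Suc k = P ^ k * Q + Q ^ k * P"
proof -
  have "P ^ Suc k + Q ^ Suc k = Dmix P Q (Suc k) + Emix P Q (Suc k)"
    unfolding mixed_power_swap_add by (simp add: add_divide_distrib[symmetric])
  also have "\<dots> = P ^ k * Q + Q ^ k * P"
    unfolding assms by (rule mixed_power_mult_swap_add) (simp_all add: field_simps)
  finally show ?thesis .
qed

lemma power_relation_of_divisor:
  fixes P Q :: "'n::finite cmat"
  assumes D_pow: "\<And>j. 1 \<le> j \<Longrightarrow> j \<le> n * m \<Longrightarrow> Dmix P Q j = Dmix P Q 1 ^ j"
    and E_pow: "\<And>j. 1 \<le> j \<Longrightarrow> j \<le> n * m \<Longrightarrow> Emix P Q j = Emix P Q 1 ^ j"
    and "0 < n" and "1 \<le> k" and "k < m"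
  shows "(P ^ n) ^ Suc k + (Q ^ n) ^ Suc k = (P ^ n) ^ k * Q ^ n + (Q ^ n) ^ k * P ^ n"
proof (rule power_relation_of_mixed_power_mult)
  have "n * Suc k \<le> n * m" "n * k \<le> n * m" "n * 1 \<le> n * m"
    using \<open>1 \<le> k\<close> \<open>k < m\<close> by (intro mult_le_mono2, simp)+
  moreover have "1 \<le> n * Suc k" "1 \<le> n * k" "1 \<le> n * 1"
    using \<open>0 < n\<close> \<open>1 \<le> k\<close> by simp_all
  ultimately have bounds: "1 \<le> n * Suc k" "n * Suc k \<le> n * m" "1 \<le> n * k" "n * k \<le> n * m"
    "1 \<le> n * 1" "n * 1 \<le> n * m"
    by simp_all
  have mult: "F (n * Suc k) = F (n * k) * F (n * 1)"
    if F_pow: "\<And>j. 1 \<le> j \<Longrightarrow> j \<le> n * m \<Longrightarrow> F j = F 1 ^ j" for F :: "nat \<Rightarrow> 'n cmat"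
  proof -
    have "F (n * Suc k) = F 1 ^ (n * k + n * 1)"
      using F_pow[OF bounds(1,2)] by (simp add: add.commute)
    also have "\<dots> = F (n * k) * F (n * 1)"
      unfolding power_add F_pow[OF bounds(3,4)] F_pow[OF bounds(5,6)] ..
    finally show ?thesis .
  qed
  show "Dmix (P ^ n) (Q ^ n) (Suc k) = Dmix (P ^ n) (Q ^ n) k * Dmix (P ^ n) (Q ^ n) 1"
    using mult[OF D_pow] unfolding mixed_power_power .
  show "Emix (P ^ n) (Q ^ n) (Suc k) = Emix (P ^ n) (Q ^ n) k * Emix (P ^ n) (Q ^ n) 1"
    using mult[OF E_pow] unfolding mixed_power_power .
qed

section \<open>The operators \<open>C\<^sub>1\<close> and \<open>C\<^sub>2\<close>\<close>

lemma omega_pow_neq_0 [simp]: "omega_pow d x \<noteq> 0"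
  by (simp add: omega_pow_def)

lemma cnj_omega_pow: "cnj (omega_pow d x) = 1 / omega_pow d x"
  by (simp add: omega_pow_def exp_cnj exp_minus field_simps)

lemma omega_pow_quarter_power: "omega_pow d (1 / 4) ^ k = omega_pow d (real k / 4)"
  by (simp add: omega_pow_def exp_of_nat_mult[symmetric] ac_simps)

lemma omega_pow_quarter_power_self:
  assumes "0 < d"
  shows "omega_pow d (1 / 4) ^ d = \<i>"
proof -
  have "omega_pow d (1 / 4) ^ d = exp (\<i> * of_real (pi / 2))"
    unfolding omega_pow_quarter_power unfolding omega_pow_def using assms
    by (intro arg_cong[of _ _ exp]) (simp add: field_simps)
  also have "\<dots> = \<i>"
    using cis_conv_exp[of "pi / 2"] by simp
  finally show ?thesis .
qed

text \<open>\<open>X\<close> and \<open>Y\<close> stand for \<open>B\<^sub>1\<^sup>-\<^sup>1\<close> and \<open>B\<^sub>2\<^sup>-\<^sup>1\<close>.\<close>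

definition Cmat1 :: "nat \<Rightarrow> 'n::finite cmat \<Rightarrow> 'n cmat \<Rightarrow> nat \<Rightarrow> 'n cmat"
  where "Cmat1 d X Y k = of_complex (acoef d k) * X ^ k
    + of_complex (cnj (acoef d k) * omega_pow d (real k)) * Y ^ k"

definition Cmat2 :: "nat \<Rightarrow> 'n::finite cmat \<Rightarrow> 'n cmat \<Rightarrow> nat \<Rightarrow> 'n cmat"
  where "Cmat2 d X Y k = of_complex (cnj (acoef d k)) * X ^ k + of_complex (acoef d k) * Y ^ k"

lemma Cmat_eq_mixed_power:
  fixes X Y :: "'n::finite cmat" and d k :: nat
  defines "u \<equiv> omega_pow d (1 / 4)"
  defines "P \<equiv> of_complex (1 / u) * X" and "Q \<equiv> of_complex u * Y"
  shows "Cmat1 d X Y k = of_complex (u ^ (2 * k)) * Dmix P Q k"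
    and "Cmat2 d X Y k = Emix P Q k"
proof -
  define v where "v = u ^ k"
  have "v \<noteq> 0"
    by (simp add: v_def u_def)
  have acoef: "acoef d k = (1 - \<i>) / 2 * v"
    by (simp add: acoef_def v_def u_def omega_pow_quarter_power)
  have cnj_acoef: "cnj (acoef d k) = (1 + \<i>) / 2 / v"
    by (simp add: acoef_def v_def u_def omega_pow_quarter_power cnj_omega_pow)
  have "omega_pow d (real k) = u ^ (k * 4)"
    by (simp add: u_def omega_pow_quarter_power)
  then have omega: "omega_pow d (real k) = v ^ 4"
    by (simp add: v_def power_mult)
  have u_pow: "u ^ (2 * k) = v ^ 2" "(1 / u) ^ k = 1 / v"
    by (simp_all add: v_def power_mult[symmetric] mult.commute power_one_over)
  have mixed: "mixed_power a b P Q k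
      = of_complex a * of_complex (1 / v) * X ^ k + of_complex b * of_complex v * Y ^ k" for a b
    unfolding mixed_power_def P_def Q_def power_of_complex_mult u_pow(2) v_def[symmetric]
    by (simp only: mult.assoc)
  have c1: "acoef d k = v ^ 2 * ((1 - \<i>) / 2 * (1 / v))"
    using \<open>v \<noteq> 0\<close> by (simp add: acoef power2_eq_square)
  have c2: "cnj (acoef d k) * omega_pow d (real k) = v ^ 2 * ((1 + \<i>) / 2 * v)"
    using \<open>v \<noteq> 0\<close> by (simp add: cnj_acoef omega field_simps eval_nat_numeral)
  show "Cmat1 d X Y k = of_complex (u ^ (2 * k)) * Dmix P Q k"
    unfolding Cmat1_def c2 unfolding c1 mixed u_pow(1) distrib_left
    by (simp only: of_complex_mult mult.assoc)
  have "cnj (acoef d k) = (1 + \<i>) / 2 * (1 / v)"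
    using cnj_acoef by simp
  then show "Cmat2 d X Y k = Emix P Q k"
    unfolding Cmat2_def mixed acoef by (simp only: of_complex_mult mult.assoc)
qed

locale Cmat_relations =
  fixes d :: nat and X Y :: "'n::finite cmat"
  assumes two_le_d: "2 \<le> d"
    and unitary_X: "unitary X" and unitary_Y: "unitary Y"
    and C1_power: "\<And>k. 1 \<le> k \<Longrightarrow> k < d \<Longrightarrow> Cmat1 d X Y k = Cmat1 d X Y 1 ^ k"
    and C2_power: "\<And>k. 1 \<le> k \<Longrightarrow> k < d \<Longrightarrow> Cmat2 d X Y k = Cmat2 d X Y 1 ^ k"
    and C1_inverse: "Cmat1 d X Y (d - 1) * Cmat1 d X Y 1 = 1"
    and C2_inverse: "Cmat2 d X Y (d - 1) * Cmat2 d X Y 1 = 1"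
begin

definition u :: complex
  where "u = omega_pow d (1 / 4)"

definition P :: "'n cmat"
  where "P = of_complex (1 / u) * X"

definition Q :: "'n cmat"
  where "Q = of_complex u * Y"

lemma d_pred: "1 \<le> d - 1" "d - 1 < d" "Suc (d - 1) = d"
  using two_le_d by auto

lemma u_power_d: "u ^ d = \<i>" and inverse_u_power_d: "(1 / u) ^ d = - \<i>"
  using omega_pow_quarter_power_self[of d] two_le_d by (simp_all add: u_def power_one_over)

lemma C1_eq: "Cmat1 d X Y k = of_complex (u ^ (2 * k)) * Dmix P Q k"
  and C2_eq: "Cmat2 d X Y k = Emix P Q k"
  unfolding u_def P_def Q_def by (rule Cmat_eq_mixed_power)+

lemma power_d_eq_last_mult:
  fixes F :: "nat \<Rightarrow> 'a::monoid_mult"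
  assumes "F (d - 1) = F 1 ^ (d - 1)"
  shows "F 1 ^ d = F (d - 1) * F 1"
proof -
  have "F 1 ^ d = F 1 ^ Suc (d - 1)"
    using d_pred by simp
  also have "\<dots> = F (d - 1) * F 1"
    unfolding power_Suc2 assms ..
  finally show ?thesis .
qed

lemma C1_power_eq: "Cmat1 d X Y 1 ^ j = of_complex (u ^ (2 * j)) * Dmix P Q 1 ^ j"
  by (simp add: C1_eq power_of_complex_mult power_mult[symmetric])

lemma Dmix_power_less:
  assumes "1 \<le> k" and "k < d"
  shows "Dmix P Q k = Dmix P Q 1 ^ k"
  using C1_power[OF assms] unfolding C1_power_eq unfolding C1_eq
  by (rule of_complex_cancel[rotated]) (simp add: u_def)

lemma Emix_power_less:
  assumes "1 \<le> k" and "k < d"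
  shows "Emix P Q k = Emix P Q 1 ^ k"
  using C2_power[OF assms] by (simp add: C2_eq)

lemma Dmix_power_d: "Dmix P Q 1 ^ d = - 1"
proof -
  have "Cmat1 d X Y 1 ^ d = 1"
    using C1_inverse power_d_eq_last_mult[OF C1_power[OF d_pred(1,2)]] by simp
  then have "of_complex (u ^ (2 * d)) * Dmix P Q 1 ^ d = 1"
    unfolding C1_power_eq .
  moreover have "u ^ (2 * d) = - 1"
    using u_power_d by (simp add: power_mult mult.commute)
  ultimately show ?thesis
    by (simp add: of_complex_minus minus_equation_iff)
qed

lemma Emix_power_d: "Emix P Q 1 ^ d = 1"
  using C2_inverse power_d_eq_last_mult[OF C2_power[OF d_pred(1,2)]] by (simp add: C2_eq)

lemma X_Y_power_d: "X ^ d = 1 \<and> Y ^ d = 1"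
proof -
  have "Dmix P Q (d - 1) * Dmix P Q 1 = - 1" "Emix P Q (d - 1) * Emix P Q 1 = 1"
    using Dmix_power_d Emix_power_d
    unfolding Dmix_power_less[OF d_pred(1,2)] Emix_power_less[OF d_pred(1,2)] power_Suc2[symmetric] d_pred(3) .
  then have "- 1 - 1 = Dmix P Q (d - 1) * Dmix P Q 1 - Emix P Q (d - 1) * Emix P Q 1"
    by simp
  also have "\<dots> = of_complex (- \<i>) * (P ^ d - Q ^ d)"
    unfolding mixed_power_mult_swap_diff using d_pred(3) by (simp add: field_simps power2_eq_square)
  also have "\<dots> = - (X ^ d) - Y ^ d"
    unfolding P_def Q_def power_of_complex_mult u_power_d inverse_u_power_d right_diff_distrib
      mult.assoc[symmetric] of_complex_mult[symmetric]
    by (simp add: of_complex_minus)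
  finally have sum: "X ^ d + Y ^ d = 2"
    by (simp add: algebra_simps)
  have "unitary (X ^ d)" "unitary (Y ^ d)"
    using unitary_X unitary_Y by (simp_all add: unitary_power)
  then show ?thesis
    using unitary_eq_1_if_add_eq_2 sum add.commute[of "X ^ d"] by metis
qed

lemma P_power_d: "P ^ d = of_complex (- \<i>)" and Q_power_d: "Q ^ d = of_complex \<i>"
  using X_Y_power_d by (simp_all add: P_def Q_def power_of_complex_mult u_power_d inverse_u_power_d)

lemma Dmix_power: "1 \<le> j \<Longrightarrow> j \<le> d \<Longrightarrow> Dmix P Q j = Dmix P Q 1 ^ j"
  and Emix_power: "1 \<le> j \<Longrightarrow> j \<le> d \<Longrightarrow> Emix P Q j = Emix P Q 1 ^ j"
proof -
  have "Dmix P Q d = - 1" "Emix P Q d = 1"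
    unfolding mixed_power_def P_power_d Q_power_d of_complex_mult[symmetric] of_complex_add[symmetric]
    by (simp_all add: field_simps of_complex_minus)
  then show "Dmix P Q j = Dmix P Q 1 ^ j" "Emix P Q j = Emix P Q 1 ^ j" if "1 \<le> j" "j \<le> d"
    using Dmix_power_less[of j] Emix_power_less[of j] Dmix_power_d Emix_power_d that
    by (cases "j = d"; simp)+
qed

theorem tr_power_eq_0:
  assumes "0 < n" and "n < d" and "n dvd d"
  shows "tr (X ^ n) = 0 \<and> tr (Y ^ n) = 0"
proof -
  obtain m where m: "d = n * m"
    using \<open>n dvd d\<close> by blast
  with \<open>n < d\<close> have "2 \<le> m"
    by (cases m) auto
  have inv: "(of_complex u * adj X) ^ n * P ^ n = 1" "P ^ n * (of_complex u * adj X) ^ n = 1"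
    using unitary_X by (simp_all add: P_def u_def unitary_def of_complex_mult_mult
        left_right_inverse_power flip: of_complex_mult)
  have "tr (P ^ n) = 0 \<and> tr (Q ^ n) = 0"
  proof (rule tr_eq_0_of_power_relations[OF inv \<open>2 \<le> m\<close>])
    show "(P ^ n) ^ Suc k + (Q ^ n) ^ Suc k = (P ^ n) ^ k * Q ^ n + (Q ^ n) ^ k * P ^ n"
      if "1 \<le> k" "k < m" for k
      using power_relation_of_divisor[of n m P Q k] Dmix_power Emix_power \<open>0 < n\<close> that
      unfolding m by blast
    show "(P ^ n) ^ m + (Q ^ n) ^ m = 0"
      by (simp add: power_mult[symmetric] m[symmetric] P_power_d Q_power_d flip: of_complex_add)
  qed
  then show ?thesis
    by (simp add: P_def Q_def power_of_complex_mult tr_of_complex_mult u_def)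
qed

end

lemma Rep_cmat_power: "Rep_cmat (x ^ k) = mpow (Rep_cmat x) k"
  by (induction k) (simp_all add: one_cmat.rep_eq times_cmat.rep_eq)

lemma Cop_eq_Rep_Cmat:
  "Cop1 d B1 B2 k = Rep_cmat (Cmat1 d (Abs_cmat (matrix_inv B1)) (Abs_cmat (matrix_inv B2)) k)"
  "Cop2 d B1 B2 k = Rep_cmat (Cmat2 d (Abs_cmat (matrix_inv B1)) (Abs_cmat (matrix_inv B2)) k)"
  by (simp_all add: Cop1_def Cop2_def Cmat1_def Cmat2_def plus_cmat.rep_eq times_cmat.rep_eq
      of_complex.rep_eq Rep_cmat_power Abs_cmat_inverse cscale_def mat_matrix_mult)

lemma matrix_inv_eq:
  fixes A A' :: "'a::semiring_1^'n^'n"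
  assumes "A ** A' = mat 1" and "A' ** A = mat 1"
  shows "matrix_inv A = A'"
proof -
  have "A ** matrix_inv A = mat 1 \<and> matrix_inv A ** A = mat 1"
    unfolding matrix_inv_def using assms
    by (intro someI[where P = "\<lambda>M. A ** M = mat 1 \<and> M ** A = mat 1"]) blast
  then have "matrix_inv A = matrix_inv A ** (A ** A')"
    using assms(1) by simp
  also have "\<dots> = A'"
    using \<open>A ** matrix_inv A = mat 1 \<and> matrix_inv A ** A = mat 1\<close> by (simp add: matrix_mul_assoc)
  finally show ?thesis .
qed

lemma unitary_Abs_cmat_matrix_inv:
  assumes "unitary_mat B"
  shows "unitary (Abs_cmat (matrix_inv B))" and "Abs_cmat (matrix_inv B) = adj (Abs_cmat B)"
proof -
  have inv: "matrix_inv B = cadjoint B"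
    using assms unfolding unitary_mat_def by (intro matrix_inv_eq) auto
  show "Abs_cmat (matrix_inv B) = adj (Abs_cmat B)"
    by (simp add: inv adj.abs_eq)
  have "cadjoint (cadjoint B) = B"
    by (simp add: cadjoint_def vec_eq_iff)
  then show "unitary (Abs_cmat (matrix_inv B))"
    using assms by (simp add: unitary_def unitary_mat_def inv adj.abs_eq times_cmat.abs_eq
        one_cmat_def Abs_cmat_inject)
qed

theorem lemma1:
  fixes d :: nat and B1 B2 :: "complex^'n^'n"
  assumes "d \<ge> 2"
    and "unitary_mat B1" and "unitary_mat B2"
    and "\<And>c. is_eigenvalue B1 c \<Longrightarrow> c \<in> {omega_pow d (real l) | l. l < d}"
    and "\<And>c. is_eigenvalue B2 c \<Longrightarrow> c \<in> {omega_pow d (real l) | l. l < d}"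
    and "\<And>k. 1 \<le> k \<Longrightarrow> k \<le> d - 1 \<Longrightarrow> Cop1 d B1 B2 k = mpow (Cop1 d B1 B2 1) k"
    and "\<And>k. 1 \<le> k \<Longrightarrow> k \<le> d - 1 \<Longrightarrow> Cop2 d B1 B2 k = mpow (Cop2 d B1 B2 1) k"
    and "\<And>k. 1 \<le> k \<Longrightarrow> k \<le> d - 1 \<Longrightarrow> Cop1 d B1 B2 (d - k) ** Cop1 d B1 B2 k = mat 1"
    and "\<And>k. 1 \<le> k \<Longrightarrow> k \<le> d - 1 \<Longrightarrow> Cop2 d B1 B2 (d - k) ** Cop2 d B1 B2 k = mat 1"
  shows "\<forall>n::nat. 0 < n \<and> n < d \<and> n dvd d \<longrightarrow>
           trace (mpow B1 n) = 0 \<and> trace (mpow B2 n) = 0"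
proof (intro allI impI)
  fix n :: nat
  assume n: "0 < n \<and> n < d \<and> n dvd d"
  define X where "X = Abs_cmat (matrix_inv B1)"
  define Y where "Y = Abs_cmat (matrix_inv B2)"
  note Cop = Cop_eq_Rep_Cmat[of d B1 B2, folded X_def Y_def]
  have d: "1 \<le> d - 1"
    using assms(1) by simp
  interpret Cmat_relations d X Y
  proof
    show "Cmat1 d X Y k = Cmat1 d X Y 1 ^ k" "Cmat2 d X Y k = Cmat2 d X Y 1 ^ k"
      if "1 \<le> k" "k < d" for k
      using assms(6,7)[of k] that by (simp_all add: Cop Rep_cmat_inject flip: Rep_cmat_power)
    show "Cmat1 d X Y (d - 1) * Cmat1 d X Y 1 = 1" "Cmat2 d X Y (d - 1) * Cmat2 d X Y 1 = 1"
      using assms(8,9)[OF order.refl d] assms(1)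
      by (simp_all add: Cop Rep_cmat_inject flip: times_cmat.rep_eq one_cmat.rep_eq)
  qed (use assms(1-3) in \<open>simp_all add: X_def Y_def unitary_Abs_cmat_matrix_inv(1)\<close>)
  have trace_eq: "trace (mpow B n) = cnj (tr (Abs_cmat (matrix_inv B) ^ n))" if "unitary_mat B" for B
    using that by (simp add: unitary_Abs_cmat_matrix_inv(2) adj_power[symmetric] tr_adj)
      (simp add: tr.rep_eq Rep_cmat_power Abs_cmat_inverse)
  show "trace (mpow B1 n) = 0 \<and> trace (mpow B2 n) = 0"
    using tr_power_eq_0 n by (simp add: X_def Y_def trace_eq[OF assms(2)] trace_eq[OF assms(3)])
qed

end
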